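(* Let $r\ge 1$ and $k\ge 0$ be integers and let $T$ be the binary tree constructed from $r$ and $k$ as described in the context. Then the height of $T$ is at most $r+3k$.
   Context: For a binary string $s$, let $f(s)$ be the string obtained from $s$ by first exhaustively removing the prefix $11$ and then exhaustively removing all substrings $011$; let $e(s)$ be the total number of removals (of a prefix $11$ or of a substring $011$) performed by $f$. The tree $T$ has vertices labeled by binary strings: the root is labeled by the empty string $\varepsilon$; a vertex labeled $s$ with $|f(s)|\le r$ and $e(s)\le k$ has a child labeled $s0$ if $|f(s)|<r$, and a child labeled $s1$ if $|f(s)|<r$ or $e(s)<k$; no other children are created. A vertex with no children is a leaf with seed position name $f(s)$. Finally, for every internal vertex with exactly one child, a copy of that child together with its whole subtree (with the same labels and seed position names) is added as a second child, so that $T$ is a full binary tree. The height is the maximum number of edges on a root-to-leaf path. *)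

theory Defs
  imports Main "HOL-Library.Extended_Nat"
begin

text \<open>Binary strings are lists of booleans: False = 0, True = 1.\<close>

fun strip11 :: "bool list \<Rightarrow> bool list \<times> nat" where
  "strip11 (True # True # s) = (let (u, n) = strip11 s in (u, Suc n))"
| "strip11 s = (s, 0)"

fun rm011 :: "bool list \<Rightarrow> bool list option" where
  "rm011 (False # True # True # s) = Some s"
| "rm011 (x # s) = map_option (Cons x) (rm011 s)"
| "rm011 [] = None"

text \<open>Iterated removal of 011 with fuel; each removal shortens the string,
  so fuel equal to the length suffices for exhaustive removal.\<close>
fun red011 :: "nat \<Rightarrow> bool list \<Rightarrow> bool list \<times> nat" where
  "red011 0 s = (s, 0)"
| "red011 (Suc n) s = (case rm011 s of None \<Rightarrow> (s, 0)
      | Some t \<Rightarrow> (let (u, m) = red011 n t in (u, Suc m)))"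

definition fred :: "bool list \<Rightarrow> bool list \<times> nat" where
  "fred s = (let (t, a) = strip11 s; (u, b) = red011 (length t) t in (u, a + b))"

definition f :: "bool list \<Rightarrow> bool list" where
  "f s = fst (fred s)"

definition e :: "bool list \<Rightarrow> nat" where
  "e s = snd (fred s)"

definition child0 :: "nat \<Rightarrow> nat \<Rightarrow> bool list \<Rightarrow> bool" where
  "child0 r k s \<longleftrightarrow> length (f s) \<le> r \<and> e s \<le> k \<and> length (f s) < r"

definition child1 :: "nat \<Rightarrow> nat \<Rightarrow> bool list \<Rightarrow> bool" where
  "child1 r k s \<longleftrightarrow> length (f s) \<le> r \<and> e s \<le> k \<and> (length (f s) < r \<or> e s < k)"

text \<open>Vertices of the full binary tree T: a vertex is a pair (p, s) where p is its
  address (sequence of left/right directions from the root) and s its label.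
  If a vertex has exactly one created child c, both of its children are labelled c
  (the original child and its copy together with the copied subtree).\<close>
inductive_set Tverts :: "nat \<Rightarrow> nat \<Rightarrow> (bool list \<times> bool list) set" for r k where
  root: "([], []) \<in> Tverts r k"
| c0: "(p, s) \<in> Tverts r k \<Longrightarrow> child0 r k s \<Longrightarrow> (p @ [False], s @ [False]) \<in> Tverts r k"
| c1: "(p, s) \<in> Tverts r k \<Longrightarrow> child1 r k s \<Longrightarrow> (p @ [True], s @ [True]) \<in> Tverts r k"
| dup0: "(p, s) \<in> Tverts r k \<Longrightarrow> child0 r k s \<Longrightarrow> \<not> child1 r k s \<Longrightarrow> (p @ [True], s @ [False]) \<in> Tverts r k"
| dup1: "(p, s) \<in> Tverts r k \<Longrightarrow> child1 r k s \<Longrightarrow> \<not> child0 r k s \<Longrightarrow> (p @ [False], s @ [True]) \<in> Tverts r k"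

text \<open>Height: supremum of the depths of the vertices (= max number of edges on a
  root-to-leaf path for a finite tree; infinite if the tree is infinite).\<close>
definition T_height :: "nat \<Rightarrow> nat \<Rightarrow> enat" where
  "T_height r k = (SUP v \<in> Tverts r k. enat (length (fst v)))"

end

theory Submission
  imports Defs
begin

text \<open>Removing a prefix 11 shortens a string by 2 and removing a substring 011 shortens it
  by 3, so \<open>|s| \<le> |f s| + 3 e(s)\<close>. A vertex labelled \<open>s\<close> has children only if
  \<open>|f s| < r \<and> e(s) \<le> k\<close> or \<open>|f s| \<le> r \<and> e(s) < k\<close>; either way \<open>|f s| + 3 e(s) < r + 3k\<close>,
  so every label, and hence every depth, is at most \<open>r + 3k\<close>.\<close>

lemma length_strip11: "length s = length (fst (strip11 s)) + 2 * snd (strip11 s)"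
  by (induction s rule: strip11.induct) (auto split: prod.splits)

lemma length_rm011: "rm011 s = Some t \<Longrightarrow> length s = length t + 3"
  by (induction s arbitrary: t rule: rm011.induct) auto

lemma length_red011: "length s = length (fst (red011 n s)) + 3 * snd (red011 n s)"
proof (induction n arbitrary: s)
  case 0
  then show ?case by simp
next
  case (Suc n)
  show ?case
  proof (cases "rm011 s")
    case None
    then show ?thesis by simp
  next
    case (Some t)
    with length_rm011[OF Some] Suc.IH[of t] show ?thesis by (auto split: prod.splits)
  qed
qed

lemma length_le_length_f_plus_e: "length s \<le> length (f s) + 3 * e s"
proof -
  obtain t a where strip: "strip11 s = (t, a)" by fastforce
  obtain u b where red: "red011 (length t) t = (u, b)" by fastforce
  have "length s = length t + 2 * a" using length_strip11[of s] strip by simp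
  moreover have "length t = length u + 3 * b" using length_red011[of t "length t"] red by simp
  moreover have "f s = u" "e s = a + b" using strip red by (auto simp: f_def e_def fred_def)
  ultimately show ?thesis by simp
qed

lemma length_less_if_child:
  assumes "child0 r k s \<or> child1 r k s"
  shows "length s < r + 3 * k"
  using assms length_le_length_f_plus_e[of s] by (auto simp: child0_def child1_def)

lemma Tverts_length: "(p, s) \<in> Tverts r k \<Longrightarrow> length p = length s \<and> length s \<le> r + 3 * k"
  by (induction rule: Tverts.induct) (use length_less_if_child[of r k] in \<open>auto simp: Suc_le_eq\<close>)

theorem lemma9:
  fixes r k :: nat
  assumes "r \<ge> 1"
  shows "T_height r k \<le> enat (r + 3 * k)"
  unfolding T_height_def
proof (rule SUP_least)
  fix v
  assume "v \<in> Tverts r k"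
  then show "enat (length (fst v)) \<le> enat (r + 3 * k)"
    using Tverts_length[of "fst v" "snd v"] by simp
qed

end
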